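(* Let $S_1\subseteq S$ with $|S_1|>1$ and $a>0$, and let $q$ be an irreducible transition matrix on $S$ such that $\mathbf P_{s,q}\big(T^+_{\overline{S_1}\cup\{t\}}=T^+_{\{t\}}\big)\ge a$ for all $s,t\in S_1$. Then for every $y\in S_1$ there exists a $(a/L)^{|S|}$-maximal graph $\overline g\in G(S_1\setminus\{y\})$ such that every path of $\overline g$ leads to $y$.
   Context: $S$ is a finite set with $|S|\ge2$, $\overline C=S\setminus C$. $(\mathbf s_n)_{n\ge0}$ is a Markov chain with transition matrix $q$, $\mathbf P_{s,q}$ its law from $\mathbf s_0=s$, and $T^+_D=\min\{n\ge1:\mathbf s_n\in D\}$ ($\min\emptyset=+\infty$). For $C\subseteq S$, a $C$-graph is a directed graph on vertex set $S$ without cycles such that each $s\in C$ has exactly one outgoing edge $(s,g(s))$ and no state outside $C$ has an outgoing edge; from $s\in C$, following the edges one reaches a unique state of $\overline C$, to which $s$ is said to lead. $G(C)$ is the set of $C$-graphs, $p(g)=\prod_{s\in C}q(g(s)\mid s)$, and for $\eta>0$, $g$ is $\eta$-maximal if $p(g)\ge\eta\max_{g'\in G(C)}p(g')$. $L=\sum_{n=1}^{|S|-1}\binom{|S|}{n}n^{|S|}$. *)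

theory Defs
  imports Complex_Main
begin

text \<open>State space: the finite type 'a (S = UNIV). A transition matrix is
  q :: 'a => 'a => real with q x y = q(y | x).\<close>

definition stochastic :: "('a::finite \<Rightarrow> 'a \<Rightarrow> real) \<Rightarrow> bool" where
  "stochastic q \<longleftrightarrow> (\<forall>x y. 0 \<le> q x y) \<and> (\<forall>x. (\<Sum>y\<in>UNIV. q x y) = 1)"

definition irreducible :: "('a::finite \<Rightarrow> 'a \<Rightarrow> real) \<Rightarrow> bool" where
  "irreducible q \<longleftrightarrow> (\<forall>s t. (s, t) \<in> {(x, y). q x y > 0}\<^sup>+)"

fun path_prob :: "('a \<Rightarrow> 'a \<Rightarrow> real) \<Rightarrow> 'a \<Rightarrow> 'a list \<Rightarrow> real" where
  "path_prob q s [] = 1"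
| "path_prob q s (x # xs) = q s x * path_prob q x xs"

definition avoid_prob :: "('a::finite \<Rightarrow> 'a \<Rightarrow> real) \<Rightarrow> 'a \<Rightarrow> 'a set \<Rightarrow> nat \<Rightarrow> real" where
  "avoid_prob q s D n = (\<Sum>xs\<in>{xs. set xs \<subseteq> - D \<and> length xs = n}. path_prob q s xs)"

text \<open>P_{s,q}(T^+_D = n+1 and s_{n+1} = t)\<close>
definition first_hit_at :: "('a::finite \<Rightarrow> 'a \<Rightarrow> real) \<Rightarrow> 'a \<Rightarrow> 'a set \<Rightarrow> 'a \<Rightarrow> nat \<Rightarrow> real" where
  "first_hit_at q s D t n = (\<Sum>xs\<in>{xs. set xs \<subseteq> - D \<and> length xs = n}. path_prob q s (xs @ [t]))"

text \<open>For t in D: P_{s,q}(T^+_D = T^+_{t}) =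
  sum_n P(T^+_D = n, s_n = t) + P(T^+_D = infinity).\<close>
definition hit_prob :: "('a::finite \<Rightarrow> 'a \<Rightarrow> real) \<Rightarrow> 'a \<Rightarrow> 'a set \<Rightarrow> 'a \<Rightarrow> real" where
  "hit_prob q s D t = (\<Sum>n. first_hit_at q s D t n) + lim (\<lambda>n. avoid_prob q s D n)"

definition cgraphs :: "'a set \<Rightarrow> ('a \<times> 'a) set set" where
  "cgraphs C = {E. E \<subseteq> C \<times> UNIV \<and> (\<forall>s\<in>C. \<exists>!t. (s, t) \<in> E) \<and> acyclic E}"

definition graph_weight :: "('a \<Rightarrow> 'a \<Rightarrow> real) \<Rightarrow> ('a \<times> 'a) set \<Rightarrow> real" where
  "graph_weight q E = (\<Prod>(s, t)\<in>E. q s t)"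

definition eta_maximal ::
  "('a::finite \<Rightarrow> 'a \<Rightarrow> real) \<Rightarrow> 'a set \<Rightarrow> real \<Rightarrow> ('a \<times> 'a) set \<Rightarrow> bool" where
  "eta_maximal q C \<eta> E \<longleftrightarrow> E \<in> cgraphs C \<and>
     graph_weight q E \<ge> \<eta> * Max (graph_weight q ` cgraphs C)"

definition leads_to :: "('a \<times> 'a) set \<Rightarrow> 'a set \<Rightarrow> 'a \<Rightarrow> 'a \<Rightarrow> bool" where
  "leads_to E C s x \<longleftrightarrow> x \<notin> C \<and> (s, x) \<in> E\<^sup>*"

definition L_const :: "nat \<Rightarrow> real" where
  "L_const N = (\<Sum>n=1..N-1. real (N choose n) * real n ^ N)"

end

theory Submission
  imports Defs "HOL-Library.FuncSet"
begin

text \<open>Fix y \<in> S1, let C = S1 - {y} and let N(z) be the total weight of the C-graphs in which z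
  leads to y. Removing the edge out of x \<in> C identifies G(C) with the pairs of a (C - {x})-graph and
  a target not leading back to x; summing over the target shows that N is harmonic on C (as in the
  Markov chain tree theorem). Hence N / N(y) dominates the probability of reaching y before the rest
  of the complement of C, so every s \<in> C leads to y in some C-graph of weight at least a / |G(C)|
  times the maximal weight. Starting from a maximal C-graph, exchange its edges at the states not
  leading to y with those of such a graph: the product of the weights of the two resulting graphs is
  unchanged, so each exchange loses at most a factor a / |G(C)| while one more state leads to y.
  Finally |G(C)| \<le> (|S| - 1)^|C| \<le> L.\<close>

section \<open>Hitting probabilities\<close>

lemma sum_paths_Suc:
  fixes q :: "'a::finite \<Rightarrow> 'a \<Rightarrow> real"
  shows "(\<Sum>xs\<in>{xs. set xs \<subseteq> A \<and> length xs = Suc n}. path_prob q s (xs @ ys)) =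
    (\<Sum>x\<in>A. q s x * (\<Sum>xs\<in>{xs. set xs \<subseteq> A \<and> length xs = n}. path_prob q x (xs @ ys)))"
proof -
  let ?P = "{xs. set xs \<subseteq> A \<and> length xs = n}"
  have "(\<Sum>xs\<in>{xs. set xs \<subseteq> A \<and> length xs = Suc n}. path_prob q s (xs @ ys)) =
      (\<Sum>(xs, x)\<in>?P \<times> A. q s x * path_prob q x (xs @ ys))"
    unfolding lists_length_Suc_eq by (subst sum.reindex[OF inj_split_Cons]) (simp add: split_def)
  also have "\<dots> = (\<Sum>x\<in>A. q s x * (\<Sum>xs\<in>?P. path_prob q x (xs @ ys)))"
    by (subst sum.cartesian_product[symmetric], subst sum.swap) (simp add: sum_distrib_left)
  finally show ?thesis .
qed

lemma lists_length_0_eq: "{xs. set xs \<subseteq> A \<and> length xs = 0} = {[]}"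
  by auto

lemma avoid_prob_0 [simp]: "avoid_prob q s D 0 = 1"
  unfolding avoid_prob_def lists_length_0_eq by simp

lemma avoid_prob_Suc: "avoid_prob q s D (Suc n) = (\<Sum>x\<in>-D. q s x * avoid_prob q x D n)"
  using sum_paths_Suc[where A = "-D" and ys = "[]"] by (simp add: avoid_prob_def)

lemma first_hit_at_0 [simp]: "first_hit_at q s D t 0 = q s t"
  unfolding first_hit_at_def lists_length_0_eq by simp

lemma first_hit_at_Suc: "first_hit_at q s D t (Suc n) = (\<Sum>x\<in>-D. q s x * first_hit_at q x D t n)"
  using sum_paths_Suc[where A = "-D" and ys = "[t]"] by (simp add: first_hit_at_def)

context
  fixes q :: "'a::finite \<Rightarrow> 'a \<Rightarrow> real"
  assumes stochastic: "stochastic q"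
begin

lemma stochastic_nonneg: "0 \<le> q x y"
  using stochastic by (simp add: stochastic_def)

lemma stochastic_sum: "(\<Sum>y\<in>UNIV. q x y) = 1"
  using stochastic by (simp add: stochastic_def)

lemma stochastic_sum_le_1: "(\<Sum>y\<in>A. q x y) \<le> 1"
  using sum_mono2[of UNIV A "q x"] stochastic_nonneg stochastic_sum by simp

lemma avoid_prob_nonneg: "0 \<le> avoid_prob q s D n"
  by (induction n arbitrary: s) (simp_all add: avoid_prob_Suc sum_nonneg stochastic_nonneg)

lemma avoid_prob_le_1: "avoid_prob q s D n \<le> 1"
proof (induction n arbitrary: s)
  case (Suc n)
  have "avoid_prob q s D (Suc n) \<le> (\<Sum>x\<in>-D. q s x)"
    unfolding avoid_prob_Suc
    by (intro sum_mono mult_left_le Suc.IH stochastic_nonneg)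
  also have "\<dots> \<le> 1" by (rule stochastic_sum_le_1)
  finally show ?case .
qed simp

lemma decseq_avoid_prob: "decseq (avoid_prob q s D)"
proof -
  have "avoid_prob q s D (Suc n) \<le> avoid_prob q s D n" for n
  proof (induction n arbitrary: s)
    case 0
    show ?case using avoid_prob_le_1 by simp
  next
    case (Suc n)
    show ?case
      unfolding avoid_prob_Suc[of q s D "Suc n"] avoid_prob_Suc[of q s D n]
      by (intro sum_mono mult_left_mono Suc.IH stochastic_nonneg)
  qed
  then show ?thesis by (rule decseq_SucI)
qed

lemma avoid_prob_Suc_lt_1:
  assumes "0 < q x v" and "v \<in> D \<or> avoid_prob q v D k < 1"
  shows "avoid_prob q x D (Suc k) < 1"
proof -
  have "avoid_prob q x D (Suc k) = (\<Sum>z\<in>UNIV. q x z * (if z \<in> D then 0 else avoid_prob q z D k))"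
    by (simp add: avoid_prob_Suc if_distrib sum.If_cases Compl_eq_Diff_UNIV)
  also have "\<dots> < (\<Sum>z\<in>UNIV. q x z)"
  proof (rule sum_strict_mono_ex1)
    show "\<forall>z\<in>UNIV. q x z * (if z \<in> D then 0 else avoid_prob q z D k) \<le> q x z"
      using avoid_prob_le_1 stochastic_nonneg by (simp add: mult_left_le)
    show "\<exists>z\<in>UNIV. q x z * (if z \<in> D then 0 else avoid_prob q z D k) < q x z"
      using assms by (intro bexI[of _ v]) auto
  qed simp
  also have "\<dots> = 1" by (rule stochastic_sum)
  finally show ?thesis .
qed

lemma avoid_prob_eventually_lt_1:
  assumes "irreducible q" and "d \<in> D"
  shows "\<exists>k. avoid_prob q x D k < 1"
proof -
  have "(x, d) \<in> {(x, y). 0 < q x y}\<^sup>+"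
    using assms(1) by (simp add: irreducible_def)
  then show ?thesis
  proof (induction rule: converse_trancl_induct)
    case (base x)
    then show ?case using avoid_prob_Suc_lt_1 assms(2) by blast
  next
    case (step x v)
    then show ?case using avoid_prob_Suc_lt_1 by blast
  qed
qed

lemma avoid_prob_add_le:
  assumes "\<And>x. avoid_prob q x D n \<le> r"
  shows "avoid_prob q s D (m + n) \<le> avoid_prob q s D m * r"
proof (induction m arbitrary: s)
  case 0
  show ?case using assms by simp
next
  case (Suc m)
  have "avoid_prob q s D (Suc m + n) \<le> (\<Sum>x\<in>-D. q s x * (avoid_prob q x D m * r))"
    unfolding add_Suc avoid_prob_Suc by (intro sum_mono mult_left_mono Suc.IH stochastic_nonneg)
  also have "\<dots> = avoid_prob q s D (Suc m) * r"
    by (simp add: avoid_prob_Suc sum_distrib_right mult.assoc)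
  finally show ?case .
qed

lemma avoid_prob_mult_le:
  assumes "\<And>x. avoid_prob q x D K \<le> \<rho>"
  shows "avoid_prob q s D (j * K) \<le> \<rho> ^ j"
proof (induction j arbitrary: s)
  case (Suc j)
  have "0 \<le> \<rho>" using assms avoid_prob_nonneg order_trans by blast
  have "avoid_prob q s D (j * K + K) \<le> avoid_prob q s D (j * K) * \<rho>"
    by (rule avoid_prob_add_le[OF assms])
  also have "\<dots> \<le> \<rho> ^ j * \<rho>"
    using Suc.IH \<open>0 \<le> \<rho>\<close> by (rule mult_right_mono)
  finally show ?case by (simp add: add.commute mult.commute)
qed simp

lemma avoid_prob_tendsto_0:
  assumes "irreducible q" and "d \<in> D"
  shows "avoid_prob q s D \<longlonglongrightarrow> 0"
proof -
  obtain k where k: "\<And>x. avoid_prob q x D (k x) < 1"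
    using avoid_prob_eventually_lt_1[OF assms] by metis
  define K where "K = Max (range k)"
  define \<rho> where "\<rho> = Max (range (\<lambda>x. avoid_prob q x D K))"
  have "avoid_prob q x D K < 1" for x
  proof -
    have "k x \<le> K" by (simp add: K_def)
    then show ?thesis using decseqD[OF decseq_avoid_prob] k[of x] order.strict_trans1 by blast
  qed
  then have "\<rho> < 1" by (simp add: \<rho>_def)
  have bound: "avoid_prob q s D (j * K) \<le> \<rho> ^ j" for j
    by (rule avoid_prob_mult_le) (simp add: \<rho>_def)
  show ?thesis
  proof (rule LIMSEQ_I)
    fix r :: real
    assume "0 < r"
    then obtain j where "\<rho> ^ j < r" using real_arch_pow_inv \<open>\<rho> < 1\<close> by blast
    then have "norm (avoid_prob q s D n - 0) < r" if "j * K \<le> n" for n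
      using decseqD[OF decseq_avoid_prob that, of s D] bound[of j] avoid_prob_nonneg[of s D n]
      by simp
    then show "\<exists>n0. \<forall>n\<ge>n0. norm (avoid_prob q s D n - 0) < r" by blast
  qed
qed

lemma first_hit_at_nonneg: "0 \<le> first_hit_at q s D t n"
  by (induction n arbitrary: s) (simp_all add: first_hit_at_Suc sum_nonneg stochastic_nonneg)

lemma first_hit_at_partial_sum_le:
  assumes "t \<in> D" and "\<And>x. 0 \<le> \<phi> x" and "1 \<le> \<phi> t"
    and superharmonic: "\<And>x. x \<notin> D \<Longrightarrow> (\<Sum>z\<in>UNIV. q x z * \<phi> z) \<le> \<phi> x"
  shows "(\<Sum>k<n. first_hit_at q s D t k) \<le> (\<Sum>z\<in>UNIV. q s z * \<phi> z)"
proof (induction n arbitrary: s)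
  case 0
  show ?case by (simp add: sum_nonneg assms(2) stochastic_nonneg)
next
  case (Suc n)
  have IH: "(\<Sum>k<n. first_hit_at q x D t k) \<le> \<phi> x" if "x \<in> -D" for x
    using Suc.IH[of x] superharmonic[of x] that by simp
  have "(\<Sum>k<Suc n. first_hit_at q s D t k) =
      q s t + (\<Sum>x\<in>-D. q s x * (\<Sum>k<n. first_hit_at q x D t k))"
    by (subst sum.lessThan_Suc_shift) (simp add: first_hit_at_Suc sum_distrib_left sum.swap[of _ "{..<n}"])
  also have "\<dots> \<le> q s t * \<phi> t + (\<Sum>x\<in>-D. q s x * \<phi> x)"
  proof (rule add_mono)
    show "q s t \<le> q s t * \<phi> t"
      using mult_left_mono[OF assms(3) stochastic_nonneg, of s t] by simp
    show "(\<Sum>x\<in>-D. q s x * (\<Sum>k<n. first_hit_at q x D t k)) \<le> (\<Sum>x\<in>-D. q s x * \<phi> x)"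
      using IH by (intro sum_mono mult_left_mono stochastic_nonneg) auto
  qed
  also have "\<dots> \<le> (\<Sum>x\<in>D. q s x * \<phi> x) + (\<Sum>x\<in>-D. q s x * \<phi> x)"
    using member_le_sum[of t D "\<lambda>x. q s x * \<phi> x"] assms(1,2) stochastic_nonneg by simp
  also have "\<dots> = (\<Sum>z\<in>UNIV. q s z * \<phi> z)"
    by (simp add: sum.union_disjoint[symmetric])
  finally show ?case .
qed

lemma hit_prob_le_superharmonic:
  assumes "irreducible q" and "t \<in> D" and "\<And>x. 0 \<le> \<phi> x" and "1 \<le> \<phi> t"
    and "\<And>x. x \<notin> D \<Longrightarrow> (\<Sum>z\<in>UNIV. q x z * \<phi> z) \<le> \<phi> x"
  shows "hit_prob q s D t \<le> (\<Sum>z\<in>UNIV. q s z * \<phi> z)"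
proof -
  note partial = first_hit_at_partial_sum_le[OF assms(2-5)]
  have "summable (first_hit_at q s D t)"
    by (rule summableI_nonneg_bounded[OF first_hit_at_nonneg partial])
  then have "(\<Sum>n. first_hit_at q s D t n) \<le> (\<Sum>z\<in>UNIV. q s z * \<phi> z)"
    by (rule suminf_le_const[OF _ partial])
  then show ?thesis
    using limI[OF avoid_prob_tendsto_0[OF assms(1,2)]] by (simp add: hit_prob_def)
qed

lemma hit_prob_le_1:
  assumes "irreducible q" and "t \<in> D"
  shows "hit_prob q s D t \<le> 1"
  using hit_prob_le_superharmonic[OF assms, of "\<lambda>_. 1"] by (simp add: stochastic_sum)

end

section \<open>C-graphs\<close>

lemma finite_cgraphs: "finite (cgraphs (C :: 'a::finite set))"
  by (rule finite_subset[of _ UNIV]) auto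

lemma cgraphsI:
  "E \<subseteq> C \<times> UNIV \<Longrightarrow> (\<And>s. s \<in> C \<Longrightarrow> \<exists>!t. (s, t) \<in> E) \<Longrightarrow> acyclic E \<Longrightarrow>
    E \<in> cgraphs C"
  unfolding cgraphs_def by auto

lemma cgraphs_source: "E \<in> cgraphs C \<Longrightarrow> (u, v) \<in> E \<Longrightarrow> u \<in> C"
  unfolding cgraphs_def by auto

lemma cgraphs_ex1_edge: "E \<in> cgraphs C \<Longrightarrow> u \<in> C \<Longrightarrow> \<exists>!v. (u, v) \<in> E"
  unfolding cgraphs_def by auto

lemma cgraphs_acyclic: "E \<in> cgraphs C \<Longrightarrow> acyclic E"
  unfolding cgraphs_def by auto

lemma cgraphs_single_valued: "E \<in> cgraphs C \<Longrightarrow> single_valued E"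
  unfolding single_valued_def cgraphs_def by blast

lemma cgraphs_rtrancl_outside: "E \<in> cgraphs C \<Longrightarrow> u \<notin> C \<Longrightarrow> (u, v) \<in> E\<^sup>* \<Longrightarrow> v = u"
  by (auto elim: converse_rtranclE dest: cgraphs_source)

lemma const_graph_in_cgraphs:
  assumes "y \<notin> C"
  shows "{(s, y) | s. s \<in> C} \<in> cgraphs C"
proof (rule cgraphsI)
  have "trans {(s, y) | s. s \<in> C}"
    using assms by (auto intro: transI)
  then show "acyclic {(s, y) | s. s \<in> C}"
    using assms by (simp add: acyclic_def trancl_id)
qed auto

lemma single_valued_rtrancl_end_unique:
  assumes "single_valued R" and "a \<notin> Domain R" and "b \<notin> Domain R"
    and "(v, a) \<in> R\<^sup>*" and "(v, b) \<in> R\<^sup>*"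
  shows "a = b"
  using single_valued_confluent[OF assms(1,4,5)] assms(2,3) by (auto elim: converse_rtranclE)

lemma graph_weight_nonneg: "stochastic q \<Longrightarrow> 0 \<le> graph_weight q E"
  unfolding graph_weight_def by (rule prod_nonneg) (auto simp: stochastic_nonneg)

lemma graph_weight_le_Max:
  "E \<in> cgraphs (C :: 'a::finite set) \<Longrightarrow> graph_weight q E \<le> Max (graph_weight q ` cgraphs C)"
  by (simp add: finite_cgraphs)

lemma Max_graph_weight_nonneg:
  assumes "stochastic q" and "y \<notin> (C :: 'a::finite set)"
  shows "0 \<le> Max (graph_weight q ` cgraphs C)"
  using graph_weight_le_Max[OF const_graph_in_cgraphs[OF assms(2)]] graph_weight_nonneg[OF assms(1)]
  by (rule order_trans[rotated])

lemma graph_weight_insert: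
  fixes E :: "('a::finite \<times> 'a) set"
  shows "(x, w) \<notin> E \<Longrightarrow> graph_weight q (insert (x, w) E) = q x w * graph_weight q E"
  by (simp add: graph_weight_def)

context
  fixes C :: "'a::finite set" and x :: 'a
  assumes x: "x \<in> C"
begin

lemma edge_from_removed_notin: "E \<in> cgraphs (C - {x}) \<Longrightarrow> (x, w) \<notin> E"
  using cgraphs_source by fastforce

lemma insert_edge_in_cgraphs:
  assumes E: "E \<in> cgraphs (C - {x})" and "(w, x) \<notin> E\<^sup>*"
  shows "insert (x, w) E \<in> cgraphs C"
proof (rule cgraphsI)
  show "insert (x, w) E \<subseteq> C \<times> UNIV"
    using E x by (auto simp: cgraphs_def)
  show "acyclic (insert (x, w) E)"
    using assms cgraphs_acyclic by simp
  show "\<exists>!t. (s, t) \<in> insert (x, w) E" if "s \<in> C" for s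
    using cgraphs_ex1_edge[OF E, of s] edge_from_removed_notin[OF E] that by (cases "s = x") auto
qed

lemma cgraphs_remove_edge:
  assumes E: "E \<in> cgraphs C"
  obtains E' w where "E' \<in> cgraphs (C - {x})" and "(w, x) \<notin> E'\<^sup>*" and "E = insert (x, w) E'"
proof -
  obtain w where w: "(x, w) \<in> E" using cgraphs_ex1_edge[OF E x] by blast
  define E' where "E' = E - {(x, w)}"
  have "E' \<in> cgraphs (C - {x})"
  proof (rule cgraphsI)
    show "E' \<subseteq> (C - {x}) \<times> UNIV"
      using E w cgraphs_ex1_edge[OF E x] by (auto simp: E'_def cgraphs_def)
    show "acyclic E'"
      using cgraphs_acyclic[OF E] by (rule acyclic_subset) (auto simp: E'_def)
    show "\<exists>!t. (s, t) \<in> E'" if "s \<in> C - {x}" for s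
      using cgraphs_ex1_edge[OF E, of s] that by (auto simp: E'_def)
  qed
  moreover have "E = insert (x, w) E'"
    using w by (auto simp: E'_def)
  moreover have "(w, x) \<notin> E'\<^sup>*"
    using cgraphs_acyclic[OF E] calculation(2) by simp
  ultimately show ?thesis using that by blast
qed

lemma bij_betw_insert_edge_cgraphs:
  "bij_betw (\<lambda>(E, w). insert (x, w) E)
     (SIGMA E:cgraphs (C - {x}). {w. (w, x) \<notin> E\<^sup>*}) (cgraphs C)"
proof -
  let ?P = "SIGMA E:cgraphs (C - {x}). {w. (w, x) \<notin> E\<^sup>*}"
  show ?thesis
  proof (rule bij_betw_imageI)
    show "inj_on (\<lambda>(E, w). insert (x, w) E) ?P"
    proof (rule inj_onI, clarsimp)
      fix E1 w1 E2 w2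
      assume "E1 \<in> cgraphs (C - {x})" "E2 \<in> cgraphs (C - {x})"
        and eq: "insert (x, w1) E1 = insert (x, w2) E2"
      then have "(x, w1) \<notin> E1" "(x, w2) \<notin> E1" "(x, w1) \<notin> E2" "(x, w2) \<notin> E2"
        using edge_from_removed_notin by blast+
      moreover from this eq have "w1 = w2" by blast
      ultimately show "E1 = E2 \<and> w1 = w2" using eq insert_ident[of "(x, w1)" E1 E2] by simp
    qed
    show "(\<lambda>(E, w). insert (x, w) E) ` ?P = cgraphs C"
    proof
      show "(\<lambda>(E, w). insert (x, w) E) ` ?P \<subseteq> cgraphs C"
        using insert_edge_in_cgraphs by auto
      show "cgraphs C \<subseteq> (\<lambda>(E, w). insert (x, w) E) ` ?P"
      proof
        fix E assume "E \<in> cgraphs C"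
        then obtain E' w where "E' \<in> cgraphs (C - {x})" "(w, x) \<notin> E'\<^sup>*" "E = insert (x, w) E'"
          by (rule cgraphs_remove_edge)
        then show "E \<in> (\<lambda>(E, w). insert (x, w) E) ` ?P"
          by (auto intro!: image_eqI[of _ _ "(E', w)"])
      qed
    qed
  qed
qed

lemma sum_cgraphs_insert_edge:
  "(\<Sum>E\<in>cgraphs C. F E) = (\<Sum>E\<in>cgraphs (C - {x}). \<Sum>w\<in>{w. (w, x) \<notin> E\<^sup>*}. F (insert (x, w) E))"
proof -
  have "(\<Sum>E\<in>cgraphs C. F E) =
      (\<Sum>(E, w)\<in>(SIGMA E:cgraphs (C - {x}). {w. (w, x) \<notin> E\<^sup>*}). F (insert (x, w) E))"
    by (subst sum.reindex_bij_betw[OF bij_betw_insert_edge_cgraphs, symmetric]) (simp add: split_def)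
  also have "\<dots> = (\<Sum>E\<in>cgraphs (C - {x}). \<Sum>w\<in>{w. (w, x) \<notin> E\<^sup>*}. F (insert (x, w) E))"
    by (rule sum.Sigma[symmetric]) (auto simp: finite_cgraphs)
  finally show ?thesis .
qed

end

definition leading_weight :: "('a::finite \<Rightarrow> 'a \<Rightarrow> real) \<Rightarrow> 'a set \<Rightarrow> 'a \<Rightarrow> 'a \<Rightarrow> real" where
  "leading_weight q C y z = (\<Sum>E\<in>cgraphs C. graph_weight q E * of_bool ((z, y) \<in> E\<^sup>*))"

lemma leading_weight_self: "leading_weight q C y y = (\<Sum>E\<in>cgraphs C. graph_weight q E)"
  by (simp add: leading_weight_def)

lemma leading_weight_nonneg: "stochastic q \<Longrightarrow> 0 \<le> leading_weight q C y z"
  unfolding leading_weight_def by (intro sum_nonneg) (simp add: graph_weight_nonneg)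

lemma leading_weight_remove_edge:
  assumes "x \<in> C"
  shows "leading_weight q C y z = (\<Sum>E\<in>cgraphs (C - {x}). graph_weight q E *
    (\<Sum>w\<in>{w. (w, x) \<notin> E\<^sup>*}. q x w * of_bool ((z, y) \<in> E\<^sup>* \<or> (z, x) \<in> E\<^sup>* \<and> (w, y) \<in> E\<^sup>*)))"
  unfolding leading_weight_def sum_cgraphs_insert_edge[OF assms]
  by (intro sum.cong refl)
    (simp add: sum_distrib_left graph_weight_insert edge_from_removed_notin[OF assms] rtrancl_insert mult_ac)

text \<open>For independent Z, W with law r and T \<subseteq> -X: P(Z \<in> T, W \<notin> X) + P(Z \<in> X, W \<in> T) = P(W \<in> T).
  With T and X the states leading to y and to x in a (C - {x})-graph, this is the harmonicity of
  the leading weight at x.\<close>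

lemma sum_reroot_identity:
  fixes r :: "'a::finite \<Rightarrow> real"
  assumes "T \<inter> X = {}" and "sum r UNIV = 1"
  shows "(\<Sum>z\<in>UNIV. r z * (\<Sum>w\<in>-X. r w * of_bool (z \<in> T \<or> z \<in> X \<and> w \<in> T))) = sum r T"
proof -
  have "-X \<inter> T = T" using assms(1) by blast
  then have inner: "(\<Sum>w\<in>-X. r w * of_bool (z \<in> T \<or> z \<in> X \<and> w \<in> T)) =
      of_bool (z \<in> T) * sum r (-X) + of_bool (z \<in> X) * sum r T" for z
    using assms(1) by (cases "z \<in> T"; cases "z \<in> X") auto
  have "(\<Sum>z\<in>UNIV. r z * (\<Sum>w\<in>-X. r w * of_bool (z \<in> T \<or> z \<in> X \<and> w \<in> T))) =
      sum r T * sum r (-X) + sum r X * sum r T"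
    unfolding inner by (simp add: distrib_left sum.distrib mult.assoc[symmetric] sum_distrib_right[symmetric])
  also have "\<dots> = sum r T * (sum r X + sum r (-X))"
    by (simp add: algebra_simps)
  also have "sum r X + sum r (-X) = 1"
    using assms(2) sum.union_disjoint[of X "-X" r] by (simp add: Compl_partition)
  finally show ?thesis by simp
qed

lemma leading_weight_harmonic:
  assumes "stochastic q" and "x \<in> C" and "y \<notin> C"
  shows "(\<Sum>z\<in>UNIV. q x z * leading_weight q C y z) = leading_weight q C y x"
proof -
  let ?inner = "\<lambda>E z. \<Sum>w\<in>{w. (w, x) \<notin> E\<^sup>*}.
    q x w * of_bool ((z, y) \<in> E\<^sup>* \<or> (z, x) \<in> E\<^sup>* \<and> (w, y) \<in> E\<^sup>*)"
  have reroot: "(\<Sum>z\<in>UNIV. q x z * ?inner E z) = sum (q x) {z. (z, y) \<in> E\<^sup>*}"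
    and at_x: "?inner E x = sum (q x) {z. (z, y) \<in> E\<^sup>*}"
    if E: "E \<in> cgraphs (C - {x})" for E
  proof -
    have "x \<notin> Domain E" "y \<notin> Domain E"
      using cgraphs_source[OF E] assms(3) by auto
    then have disjoint: "{z. (z, y) \<in> E\<^sup>*} \<inter> {z. (z, x) \<in> E\<^sup>*} = {}"
      using single_valued_rtrancl_end_unique[OF cgraphs_single_valued[OF E]] assms(2,3) by blast
    show "(\<Sum>z\<in>UNIV. q x z * ?inner E z) = sum (q x) {z. (z, y) \<in> E\<^sup>*}"
      using sum_reroot_identity[OF disjoint stochastic_sum[OF assms(1)]] by (simp add: Collect_neg_eq)
    have "(x, y) \<notin> E\<^sup>*"
      using cgraphs_rtrancl_outside[OF E, of x y] assms(2,3) by auto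
    moreover have "{w. (w, x) \<notin> E\<^sup>*} \<inter> {w. (w, y) \<in> E\<^sup>*} = {w. (w, y) \<in> E\<^sup>*}"
      using disjoint by blast
    ultimately show "?inner E x = sum (q x) {z. (z, y) \<in> E\<^sup>*}"
      by simp
  qed
  have "(\<Sum>z\<in>UNIV. q x z * leading_weight q C y z) =
      (\<Sum>E\<in>cgraphs (C - {x}). graph_weight q E * (\<Sum>z\<in>UNIV. q x z * ?inner E z))"
    by (simp add: leading_weight_remove_edge[OF assms(2)] sum_distrib_left sum.swap[of _ UNIV] mult_ac)
  also have "\<dots> = (\<Sum>E\<in>cgraphs (C - {x}). graph_weight q E * ?inner E x)"
    using reroot at_x by simp
  also have "\<dots> = leading_weight q C y x"
    by (simp add: leading_weight_remove_edge[OF assms(2)])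
  finally show ?thesis .
qed

lemma hit_prob_mult_le_leading_weight:
  assumes "stochastic q" and "irreducible q" and "s \<in> C" and "y \<notin> C"
  shows "hit_prob q s (-C) y * leading_weight q C y y \<le> leading_weight q C y s"
proof (cases "leading_weight q C y y = 0")
  case True
  then show ?thesis using leading_weight_nonneg[OF assms(1)] by simp
next
  case False
  let ?Z = "leading_weight q C y y"
  have "0 < ?Z" using False leading_weight_nonneg[OF assms(1), of C y y] by simp
  define \<phi> where "\<phi> z = leading_weight q C y z / ?Z" for z
  have harmonic: "(\<Sum>z\<in>UNIV. q x z * \<phi> z) = \<phi> x" if "x \<in> C" for x
    using leading_weight_harmonic[OF assms(1) that assms(4)]
    by (simp add: \<phi>_def sum_divide_distrib[symmetric])
  have "hit_prob q s (-C) y \<le> (\<Sum>z\<in>UNIV. q s z * \<phi> z)"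
    using assms(4) \<open>0 < ?Z\<close> harmonic leading_weight_nonneg[OF assms(1)]
    by (intro hit_prob_le_superharmonic[OF assms(1,2)]) (auto simp: \<phi>_def)
  then show ?thesis
    using harmonic[OF assms(3)] \<open>0 < ?Z\<close> by (simp add: \<phi>_def pos_le_divide_eq)
qed

lemma exists_leading_graph_ge_leading_weight:
  assumes "stochastic q" and "s \<in> C" and "y \<notin> C"
  shows "\<exists>E\<in>cgraphs C. (s, y) \<in> E\<^sup>* \<and> leading_weight q C y s \<le> card (cgraphs C) * graph_weight q E"
proof -
  let ?G = "{E\<in>cgraphs C. (s, y) \<in> E\<^sup>*}"
  have "{(s, y) | s. s \<in> C} \<in> ?G"
    using const_graph_in_cgraphs[OF assms(3)] assms(2) by auto
  then have "finite ?G" and "?G \<noteq> {}"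
    using finite_cgraphs by auto
  then obtain E where E: "E \<in> ?G" and max: "\<And>E'. E' \<in> ?G \<Longrightarrow> graph_weight q E' \<le> graph_weight q E"
    using Max_in[of "graph_weight q ` ?G"] Max_ge[of "graph_weight q ` ?G"] by fastforce
  have "leading_weight q C y s = sum (graph_weight q) ?G"
    by (simp add: leading_weight_def Int_def)
  also have "\<dots> \<le> card ?G * graph_weight q E"
    using max by (rule sum_bounded_above)
  also have "\<dots> \<le> card (cgraphs C) * graph_weight q E"
    using graph_weight_nonneg[OF assms(1)] finite_cgraphs
    by (intro mult_right_mono) (auto intro: card_mono)
  finally show ?thesis using E by blast
qed

lemma exists_leading_graph_of_hit_prob:
  fixes C :: "'a::finite set"
  assumes "stochastic q" and "irreducible q" and "s \<in> C" and "y \<notin> C"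
    and "0 \<le> a" and "a \<le> hit_prob q s (-C) y"
  shows "\<exists>E\<in>cgraphs C. (s, y) \<in> E\<^sup>* \<and>
    a / card (cgraphs C) * Max (graph_weight q ` cgraphs C) \<le> graph_weight q E"
proof -
  obtain E where E: "E \<in> cgraphs C" "(s, y) \<in> E\<^sup>*"
    and le: "leading_weight q C y s \<le> card (cgraphs C) * graph_weight q E"
    using exists_leading_graph_ge_leading_weight[OF assms(1,3,4)] by blast
  have "0 < card (cgraphs C)"
    using const_graph_in_cgraphs[OF assms(4)] finite_cgraphs card_gt_0_iff by blast
  have "Max (graph_weight q ` cgraphs C) \<le> leading_weight q C y y"
    unfolding leading_weight_self
  proof (rule Max.boundedI)
    show "graph_weight q ` cgraphs C \<noteq> {}"
      using const_graph_in_cgraphs[OF assms(4)] by blast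
    show "w \<le> sum (graph_weight q) (cgraphs C)" if "w \<in> graph_weight q ` cgraphs C" for w
      using that graph_weight_nonneg[OF assms(1)] by (auto intro: member_le_sum finite_cgraphs)
  qed (simp add: finite_cgraphs)
  then have "a * Max (graph_weight q ` cgraphs C) \<le> a * leading_weight q C y y"
    using assms(5) by (rule mult_left_mono)
  also have "\<dots> \<le> hit_prob q s (-C) y * leading_weight q C y y"
    using assms(6) leading_weight_nonneg[OF assms(1)] by (rule mult_right_mono)
  also have "\<dots> \<le> card (cgraphs C) * graph_weight q E"
    using hit_prob_mult_le_leading_weight[OF assms(1-4)] le by (rule order_trans)
  finally show ?thesis
    using E \<open>0 < card (cgraphs C)\<close> by (auto simp: field_simps)
qed

section \<open>The exchange argument\<close>

definition graph_splice :: "'a set \<Rightarrow> ('a \<times> 'a) set \<Rightarrow> ('a \<times> 'a) set \<Rightarrow> ('a \<times> 'a) set" where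
  "graph_splice B h g = {e\<in>h. fst e \<in> B} \<union> {e\<in>g. fst e \<notin> B}"

lemma acyclic_Un_finite:
  fixes R S :: "('a::finite \<times> 'a) set"
  assumes "acyclic R" and "acyclic S" and "Range R \<inter> Domain S = {}"
  shows "acyclic (R \<union> S)"
proof -
  have "wf (S \<union> R)"
    using assms by (intro wf_Un) (auto simp: wf_iff_acyclic_if_finite)
  then show ?thesis
    by (simp add: wf_iff_acyclic_if_finite Un_commute)
qed

lemma graph_splice_in_cgraphs:
  fixes C :: "'a::finite set"
  assumes h: "h \<in> cgraphs C" and g: "g \<in> cgraphs C"
    and closed: "\<And>u v. (u, v) \<in> h \<Longrightarrow> u \<in> B \<Longrightarrow> v \<in> B"
  shows "graph_splice B h g \<in> cgraphs C"
  unfolding graph_splice_def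
proof (rule cgraphsI)
  show "{e \<in> h. fst e \<in> B} \<union> {e \<in> g. fst e \<notin> B} \<subseteq> C \<times> UNIV"
    using h g by (auto simp: cgraphs_def)
  show "\<exists>!t. (s, t) \<in> {e \<in> h. fst e \<in> B} \<union> {e \<in> g. fst e \<notin> B}" if "s \<in> C" for s
    using cgraphs_ex1_edge[OF h that] cgraphs_ex1_edge[OF g that] by (cases "s \<in> B") auto
  show "acyclic ({e \<in> h. fst e \<in> B} \<union> {e \<in> g. fst e \<notin> B})"
    using closed
    by (intro acyclic_Un_finite acyclic_subset[OF cgraphs_acyclic[OF h]]
        acyclic_subset[OF cgraphs_acyclic[OF g]]) auto
qed

lemma graph_weight_Un_disjoint:
  fixes A A' :: "('a::finite \<times> 'a) set"
  shows "A \<inter> A' = {} \<Longrightarrow> graph_weight q (A \<union> A') = graph_weight q A * graph_weight q A'"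
  unfolding graph_weight_def by (rule prod.union_disjoint) auto

lemma graph_weight_graph_splice:
  fixes h g :: "('a::finite \<times> 'a) set"
  shows "graph_weight q (graph_splice B h g) * graph_weight q (graph_splice (-B) h g) =
    graph_weight q h * graph_weight q g"
proof -
  have split: "graph_weight q E = graph_weight q {e\<in>E. fst e \<in> B} * graph_weight q {e\<in>E. fst e \<notin> B}"
    for E :: "('a \<times> 'a) set"
  proof -
    have "E = {e\<in>E. fst e \<in> B} \<union> {e\<in>E. fst e \<notin> B}" by blast
    then show ?thesis by (metis (no_types, lifting) graph_weight_Un_disjoint disjoint_iff mem_Collect_eq)
  qed
  have "graph_weight q (graph_splice B h g) =
      graph_weight q {e\<in>h. fst e \<in> B} * graph_weight q {e\<in>g. fst e \<notin> B}"
    and "graph_weight q (graph_splice (-B) h g) =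
      graph_weight q {e\<in>h. fst e \<notin> B} * graph_weight q {e\<in>g. fst e \<in> B}"
    unfolding graph_splice_def by (auto intro!: graph_weight_Un_disjoint)
  then show ?thesis
    using split[of h] split[of g] by (simp add: ac_simps)
qed

lemma cgraphs_rtrancl_edge_iff:
  assumes "h \<in> cgraphs C" and "y \<notin> C" and "(u, v) \<in> h"
  shows "(u, y) \<in> h\<^sup>* \<longleftrightarrow> (v, y) \<in> h\<^sup>*"
proof
  assume "(u, y) \<in> h\<^sup>*"
  moreover have "u \<noteq> y"
    using cgraphs_source[OF assms(1,3)] assms(2) by auto
  ultimately obtain v' where "(u, v') \<in> h" and "(v', y) \<in> h\<^sup>*"
    by (auto elim: converse_rtranclE)
  then show "(v, y) \<in> h\<^sup>*"
    using cgraphs_single_valued[OF assms(1)] assms(3) by (auto dest: single_valuedD)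
qed (use assms(3) in \<open>rule converse_rtrancl_into_rtrancl\<close>)

lemma rtrancl_graph_splice_leading:
  assumes h: "h \<in> cgraphs C" and "y \<notin> C" and "(u, y) \<in> h\<^sup>* \<or> (u, y) \<in> g\<^sup>*"
  shows "(u, y) \<in> (graph_splice {u. (u, y) \<in> h\<^sup>*} h g)\<^sup>*"
proof -
  define S where "S = graph_splice {u. (u, y) \<in> h\<^sup>*} h g"
  have from_h: "(u, y) \<in> S\<^sup>*" if "(u, y) \<in> h\<^sup>*" for u
    using that
  proof (induction rule: converse_rtrancl_induct)
    case (step u v)
    then have "(u, v) \<in> S"
      by (auto simp: S_def graph_splice_def intro: converse_rtrancl_into_rtrancl)
    then show ?case using step.IH by (rule converse_rtrancl_into_rtrancl)
  qed simp
  have "(u, y) \<in> S\<^sup>*" if "(u, y) \<in> g\<^sup>*"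
    using that
  proof (induction rule: converse_rtrancl_induct)
    case (step u v)
    show ?case
    proof (cases "(u, y) \<in> h\<^sup>*")
      case False
      with step have "(u, v) \<in> S" by (simp add: S_def graph_splice_def)
      then show ?thesis using step.IH by (rule converse_rtrancl_into_rtrancl)
    qed (rule from_h)
  qed simp
  then show ?thesis using from_h assms(3) by (auto simp: S_def)
qed

lemma exchange_step:
  fixes C :: "'a::finite set" and q :: "'a \<Rightarrow> 'a \<Rightarrow> real"
  defines "M \<equiv> Max (graph_weight q ` cgraphs C)"
  assumes "stochastic q" and "y \<notin> C" and h: "h \<in> cgraphs C" and g: "g \<in> cgraphs C"
    and "s \<in> C" and "(s, y) \<notin> h\<^sup>*" and "(s, y) \<in> g\<^sup>*"
    and "0 < M" and "c * M \<le> graph_weight q g"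
  shows "\<exists>h'\<in>cgraphs C. {u\<in>C. (u, y) \<notin> h'\<^sup>*} \<subset> {u\<in>C. (u, y) \<notin> h\<^sup>*} \<and>
    c * graph_weight q h \<le> graph_weight q h'"
proof -
  let ?B = "{u. (u, y) \<in> h\<^sup>*}"
  let ?h' = "graph_splice ?B h g" and ?h2 = "graph_splice (-?B) h g"
  have h': "?h' \<in> cgraphs C" and h2: "?h2 \<in> cgraphs C"
    using cgraphs_rtrancl_edge_iff[OF h assms(3)] by (auto intro!: graph_splice_in_cgraphs[OF h g])
  have "{u\<in>C. (u, y) \<notin> ?h'\<^sup>*} \<subset> {u\<in>C. (u, y) \<notin> h\<^sup>*}"
    using rtrancl_graph_splice_leading[OF h assms(3)] assms(6-8) by blast
  moreover have "graph_weight q h * (c * M) \<le> graph_weight q ?h' * M"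
  proof -
    have "graph_weight q h * (c * M) \<le> graph_weight q h * graph_weight q g"
      using assms(10) graph_weight_nonneg[OF assms(2)] by (rule mult_left_mono)
    also have "\<dots> = graph_weight q ?h' * graph_weight q ?h2"
      by (rule graph_weight_graph_splice[symmetric])
    also have "\<dots> \<le> graph_weight q ?h' * M"
      using graph_weight_le_Max[OF h2] graph_weight_nonneg[OF assms(2)]
      by (intro mult_left_mono) (simp_all add: M_def)
    finally show ?thesis .
  qed
  then have "c * graph_weight q h \<le> graph_weight q ?h'"
    using assms(9) by (simp add: mult_ac)
  ultimately show ?thesis using h' by blast
qed

lemma exists_leading_graph_by_exchange:
  fixes C :: "'a::finite set" and q :: "'a \<Rightarrow> 'a \<Rightarrow> real"
  defines "M \<equiv> Max (graph_weight q ` cgraphs C)"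
  assumes "stochastic q" and "y \<notin> C" and "0 < M" and "0 \<le> c" and "c \<le> 1"
    and hyp: "\<And>s. s \<in> C \<Longrightarrow> \<exists>g\<in>cgraphs C. (s, y) \<in> g\<^sup>* \<and> c * M \<le> graph_weight q g"
    and "h \<in> cgraphs C"
  shows "\<exists>E\<in>cgraphs C. (\<forall>s\<in>C. (s, y) \<in> E\<^sup>*) \<and>
    c ^ card {s\<in>C. (s, y) \<notin> h\<^sup>*} * graph_weight q h \<le> graph_weight q E"
  using assms(8)
proof (induction "card {s\<in>C. (s, y) \<notin> h\<^sup>*}" arbitrary: h rule: less_induct)
  case less
  show ?case
  proof (cases "\<forall>s\<in>C. (s, y) \<in> h\<^sup>*")
    case True
    then have empty: "{s\<in>C. (s, y) \<notin> h\<^sup>*} = {}" by blast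
    show ?thesis using True less.prems unfolding empty by auto
  next
    case False
    then obtain s where s: "s \<in> C" "(s, y) \<notin> h\<^sup>*" by blast
    with hyp obtain g where g: "g \<in> cgraphs C" "(s, y) \<in> g\<^sup>*" "c * M \<le> graph_weight q g"
      by blast
    obtain h' where h': "h' \<in> cgraphs C"
      and fewer: "{u\<in>C. (u, y) \<notin> h'\<^sup>*} \<subset> {u\<in>C. (u, y) \<notin> h\<^sup>*}"
      and heavier: "c * graph_weight q h \<le> graph_weight q h'"
      using exchange_step[OF assms(2,3) less.prems g(1) s g(2) assms(4)[unfolded M_def] g(3)[unfolded M_def]]
      by blast
    let ?k' = "card {u\<in>C. (u, y) \<notin> h'\<^sup>*}" and ?k = "card {u\<in>C. (u, y) \<notin> h\<^sup>*}"
    have "?k' < ?k" using fewer by (simp add: psubset_card_mono)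
    then obtain E where E: "E \<in> cgraphs C" "\<forall>s\<in>C. (s, y) \<in> E\<^sup>*"
      "c ^ ?k' * graph_weight q h' \<le> graph_weight q E"
      using less.hyps[OF _ h'] by blast
    have "c ^ ?k \<le> c * c ^ ?k'"
      using \<open>?k' < ?k\<close> assms(5,6) power_decreasing[of "Suc ?k'" ?k c] by simp
    then have "c ^ ?k * graph_weight q h \<le> (c * c ^ ?k') * graph_weight q h"
      using graph_weight_nonneg[OF assms(2)] by (rule mult_right_mono)
    also have "\<dots> = c ^ ?k' * (c * graph_weight q h)"
      by (simp add: ac_simps)
    also have "\<dots> \<le> c ^ ?k' * graph_weight q h'"
      using heavier assms(5) by (simp add: mult_left_mono)
    finally show ?thesis using E by auto
  qed
qed

lemma exists_leading_graph_near_max: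
  fixes C :: "'a::finite set" and q :: "'a \<Rightarrow> 'a \<Rightarrow> real"
  defines "M \<equiv> Max (graph_weight q ` cgraphs C)"
  assumes "stochastic q" and "y \<notin> C" and "0 \<le> c" and "c \<le> 1"
    and "\<And>s. s \<in> C \<Longrightarrow> \<exists>g\<in>cgraphs C. (s, y) \<in> g\<^sup>* \<and> c * M \<le> graph_weight q g"
  shows "\<exists>E\<in>cgraphs C. (\<forall>s\<in>C. (s, y) \<in> E\<^sup>*) \<and> c ^ card C * M \<le> graph_weight q E"
proof (cases "M = 0")
  case True
  let ?E = "{(s, y) | s. s \<in> C}"
  have "\<forall>s\<in>C. (s, y) \<in> ?E\<^sup>*"
    by (auto intro: r_into_rtrancl)
  moreover have "c ^ card C * M \<le> graph_weight q ?E"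
    using True graph_weight_nonneg[OF assms(2)] by simp
  ultimately show ?thesis
    using const_graph_in_cgraphs[OF assms(3)] by blast
next
  case False
  then have "0 < M"
    using Max_graph_weight_nonneg[OF assms(2,3)] by (simp add: M_def)
  have "M \<in> graph_weight q ` cgraphs C"
    unfolding M_def using const_graph_in_cgraphs[OF assms(3)] finite_cgraphs by (intro Max_in) auto
  then obtain h where h: "h \<in> cgraphs C" "graph_weight q h = M"
    by blast
  obtain E where E: "E \<in> cgraphs C" "\<forall>s\<in>C. (s, y) \<in> E\<^sup>*"
    "c ^ card {s\<in>C. (s, y) \<notin> h\<^sup>*} * graph_weight q h \<le> graph_weight q E"
    using exists_leading_graph_by_exchange[OF assms(2,3) \<open>0 < M\<close>[unfolded M_def] assms(4,5)
        assms(6)[unfolded M_def] h(1)]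
    by blast
  have "c ^ card C \<le> c ^ card {s\<in>C. (s, y) \<notin> h\<^sup>*}"
    using assms(4,5) by (intro power_decreasing card_mono) auto
  then have "c ^ card C * M \<le> c ^ card {s\<in>C. (s, y) \<notin> h\<^sup>*} * M"
    using \<open>0 < M\<close> by simp
  then show ?thesis using E h(2) by auto
qed

lemma exists_eta_maximal_leading_graph:
  fixes C :: "'a::finite set" and L :: real
  assumes "stochastic q" and "irreducible q" and "y \<notin> C" and "C \<noteq> {}" and "0 < a"
    and hit: "\<And>s. s \<in> C \<Longrightarrow> a \<le> hit_prob q s (-C) y"
    and "card (cgraphs C) \<le> L" and "card C \<le> n"
  shows "\<exists>E\<in>cgraphs C. eta_maximal q C ((a / L) ^ n) E \<and> (\<forall>s\<in>C. leads_to E C s y)"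
proof -
  define M where "M = Max (graph_weight q ` cgraphs C)"
  define K where "K = real (card (cgraphs C))"
  obtain s0 where "s0 \<in> C" using assms(4) by blast
  then have "a \<le> 1"
    using hit hit_prob_le_1[OF assms(1,2), of y "-C" s0] assms(3) by fastforce
  have "1 \<le> K"
    using const_graph_in_cgraphs[OF assms(3)] finite_cgraphs by (auto simp: K_def Suc_le_eq card_gt_0_iff)
  have hyp: "\<exists>g\<in>cgraphs C. (s, y) \<in> g\<^sup>* \<and> a / K * M \<le> graph_weight q g" if "s \<in> C" for s
    using exists_leading_graph_of_hit_prob[OF assms(1,2) that assms(3) _ hit[OF that]] assms(5)
    by (simp add: K_def M_def)
  have "0 \<le> a / K" and "a / K \<le> 1"
    using assms(5) \<open>a \<le> 1\<close> \<open>1 \<le> K\<close> by auto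
  then obtain E where E: "E \<in> cgraphs C" "\<forall>s\<in>C. (s, y) \<in> E\<^sup>*" "(a / K) ^ card C * M \<le> graph_weight q E"
    using exists_leading_graph_near_max[OF assms(1,3)] hyp unfolding M_def by blast
  have "(a / L) ^ n \<le> (a / L) ^ card C"
    using assms(5,7,8) \<open>a \<le> 1\<close> \<open>1 \<le> K\<close> by (intro power_decreasing) (simp_all add: K_def)
  also have "\<dots> \<le> (a / K) ^ card C"
    using assms(5,7) \<open>1 \<le> K\<close> by (intro power_mono divide_left_mono) (simp_all add: K_def)
  finally have "(a / L) ^ n * M \<le> (a / K) ^ card C * M"
    using Max_graph_weight_nonneg[OF assms(1,3)] by (simp add: M_def mult_right_mono)
  also have "\<dots> \<le> graph_weight q E" by (rule E(3))
  finally show ?thesis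
    using E(1,2) assms(3) by (auto simp: eta_maximal_def leads_to_def M_def)
qed

section \<open>Counting C-graphs\<close>

lemma cgraphs_subset_image_PiE:
  "cgraphs C \<subseteq> (\<lambda>f. {(u, f u) | u. u \<in> C}) ` (\<Pi>\<^sub>E u\<in>C. - {u})"
proof
  fix E assume E: "E \<in> cgraphs C"
  obtain f where f: "\<And>u. u \<in> C \<Longrightarrow> (u, f u) \<in> E"
    using cgraphs_ex1_edge[OF E] by metis
  have "E = {(u, restrict f C u) | u. u \<in> C}"
    using f cgraphs_source[OF E] cgraphs_ex1_edge[OF E] by fastforce
  moreover have "restrict f C \<in> (\<Pi>\<^sub>E u\<in>C. - {u})"
    using f cgraphs_acyclic[OF E] by (fastforce simp: acyclic_def)
  ultimately show "E \<in> (\<lambda>f. {(u, f u) | u. u \<in> C}) ` (\<Pi>\<^sub>E u\<in>C. - {u})" by blast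
qed

lemma card_cgraphs_le: "card (cgraphs (C :: 'a::finite set)) \<le> (card (UNIV :: 'a set) - 1) ^ card C"
proof -
  have "card (cgraphs C) \<le> card ((\<lambda>f. {(u, f u) | u. u \<in> C}) ` (\<Pi>\<^sub>E u\<in>C. - {u}))"
    by (intro card_mono cgraphs_subset_image_PiE) simp
  also have "\<dots> \<le> card (\<Pi>\<^sub>E u\<in>C. - {u})"
    by (rule card_image_le) (simp add: finite_PiE)
  also have "\<dots> = (card (UNIV :: 'a set) - 1) ^ card C"
    by (simp add: card_PiE Compl_eq_Diff_UNIV)
  finally show ?thesis .
qed

lemma power_le_L_const:
  assumes "2 \<le> N" and "k \<le> N"
  shows "real (N - 1) ^ k \<le> L_const N"
proof -
  have "real (N - 1) ^ k \<le> real (N - 1) ^ N"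
    using assms by (intro power_increasing) auto
  also have "\<dots> \<le> real (N choose (N - 1)) * real (N - 1) ^ N"
  proof -
    have "N choose (N - 1) = N" using assms(1) by (subst binomial_symmetric) auto
    then show ?thesis using assms(1) by (simp add: mult_le_cancel_right1)
  qed
  also have "\<dots> \<le> L_const N"
    unfolding L_const_def using assms(1)
    by (intro member_le_sum[of "N - 1" "{1..N - 1}" "\<lambda>n. real (N choose n) * real n ^ N"]) auto
  finally show ?thesis .
qed

lemma card_cgraphs_le_L_const:
  assumes "2 \<le> card (UNIV :: 'a set)"
  shows "real (card (cgraphs (C :: 'a::finite set))) \<le> L_const (card (UNIV :: 'a set))"
proof -
  have "real (card (cgraphs C)) \<le> real (card (UNIV :: 'a set) - 1) ^ card C"
    using card_cgraphs_le[of C] by (metis of_nat_le_iff of_nat_power)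
  also have "\<dots> \<le> L_const (card (UNIV :: 'a set))"
    using assms by (intro power_le_L_const) (simp_all add: card_mono)
  finally show ?thesis .
qed

theorem lemma5:
  fixes q :: "'a::finite \<Rightarrow> 'a \<Rightarrow> real" and S1 :: "'a set" and a :: real
  assumes "card (UNIV::'a set) \<ge> 2"
    and "card S1 > 1"
    and "a > 0"
    and "stochastic q"
    and "irreducible q"
    and "\<forall>s\<in>S1. \<forall>t\<in>S1. hit_prob q s (- S1 \<union> {t}) t \<ge> a"
  shows "\<forall>y\<in>S1. \<exists>E\<in>cgraphs (S1 - {y}).
           eta_maximal q (S1 - {y}) ((a / L_const (card (UNIV::'a set))) ^ card (UNIV::'a set)) E \<and>
           (\<forall>s\<in>S1 - {y}. leads_to E (S1 - {y}) s y)"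
proof
  fix y assume "y \<in> S1"
  let ?C = "S1 - {y}"
  have "- S1 \<union> {y} = - ?C" using \<open>y \<in> S1\<close> by auto
  then have hit: "a \<le> hit_prob q s (- ?C) y" if "s \<in> ?C" for s
    using assms(6) \<open>y \<in> S1\<close> that by auto
  have "card ?C = card S1 - 1"
    using \<open>y \<in> S1\<close> by (simp add: card_Diff_singleton)
  then have "?C \<noteq> {}" using assms(2) by (metis card.empty not_less0 zero_less_diff)
  show "\<exists>E\<in>cgraphs ?C.
      eta_maximal q ?C ((a / L_const (card (UNIV::'a set))) ^ card (UNIV::'a set)) E \<and>
      (\<forall>s\<in>?C. leads_to E ?C s y)"
    by (rule exists_eta_maximal_leading_graph[OF assms(4,5) _ \<open>?C \<noteq> {}\<close> assms(3) hit])
      (simp_all add: card_cgraphs_le_L_const[OF assms(1)] card_mono)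
qed

end
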